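(* Let $\psi(u,v)$ be a conjunction of difference constraints between two integer variables $u,v$ (of the forms $u\le v+d$ and $v\le u+d$, $d\in\mathbb{Z}$) which contains a conjunct $u\le v-c$ for some $c>0$. Let $n\ge3$. Then $\exists S_3,\dots,S_{n-1}.\ \bigwedge_{2\le i\le n-1}\Big(S_i=S_{i+1}\cup\{\min(S_i)\}\wedge\max(S_i)=\max(S_{i+1})\wedge\psi(\min(S_i),\min(S_{i+1}))\Big)$ is equivalent to $S_n\neq\emptyset\wedge S_2\setminus S_n\neq\emptyset\wedge S_n\subseteq S_2\wedge|S_2\setminus S_n|=n-2\wedge\max(S_2\setminus S_n)<\min(S_n)\wedge\forall y,z.\ \big(\mathsf{succ}((S_2\setminus S_n)\cup\{\min(S_n)\},y,z)\rightarrow\psi(y,z)\big)$.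
   Context: Set variables range over finite subsets of $\mathbb{Z}$, integer variables over $\mathbb{Z}$; $\min,\max$ of the empty set are undefined and atoms containing undefined terms are false. $\mathsf{succ}(S,x,y)$ abbreviates $x\in S\wedge y\in S\wedge x<y\wedge\forall z\in S.\,(z\le x\vee y\le z)$, i.e. $y$ is the successor of $x$ in $S$. $|\cdot|$ is cardinality. *)

theory Defs
  imports Main
begin

type_synonym dconstr = "bool \<times> int"

definition holds_dc :: "dconstr \<Rightarrow> int \<Rightarrow> int \<Rightarrow> bool" where
  "holds_dc c u v = (if fst c then u \<le> v + snd c else v \<le> u + snd c)"

definition psi :: "dconstr list \<Rightarrow> int \<Rightarrow> int \<Rightarrow> bool" where
  "psi cs u v = (\<forall>c\<in>set cs. holds_dc c u v)"

definition succ :: "int set \<Rightarrow> int \<Rightarrow> int \<Rightarrow> bool" where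
  "succ S x y = (x \<in> S \<and> y \<in> S \<and> x < y \<and> (\<forall>z\<in>S. z \<le> x \<or> y \<le> z))"

end

theory Submission
  imports Defs
begin

text \<open>The sets \<open>S\<^sub>2 \<supset> S\<^sub>3 \<supset> \<dots> \<supset> S\<^sub>n\<close> arise from \<open>S\<^sub>2\<close> by deleting the minimum
  \<open>n - 2\<close> times, and \<open>\<psi>\<close> relates consecutive minima. Since \<open>\<psi>(u, v)\<close> forces \<open>u < v\<close>, the
  deleted minima are exactly the elements of \<open>S\<^sub>2 - S\<^sub>n\<close>, all below \<open>min S\<^sub>n\<close>, and the
  consecutive minima are exactly the successor pairs of \<open>(S\<^sub>2 - S\<^sub>n) \<union> {min S\<^sub>n}\<close>. The
  induction on \<open>n\<close> rests on one fact: deleting the minimum \<open>m\<close> of a set \<open>X\<close> below all other elements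
  removes from its successor relation exactly the pair \<open>(m, min (X - {m}))\<close>.\<close>

lemma succ_insert_below:
  assumes "finite X" "X \<noteq> {}" "m < Min X"
  shows "succ (insert m X) y z \<longleftrightarrow> (y = m \<and> z = Min X) \<or> succ X y z"
proof -
  have below: "m < x" if "x \<in> X" for x
    using assms(1,3) that by (meson Min_le less_le_trans)
  have "Min X \<in> X" using assms(1,2) by simp
  then show ?thesis
    using below assms(1) unfolding succ_def
    by (auto intro: antisym dest: below) (meson antisym Min_le leD)+
qed

definition consecutive :: "(int \<Rightarrow> int \<Rightarrow> bool) \<Rightarrow> int set \<Rightarrow> bool" where
  "consecutive P X \<longleftrightarrow> (\<forall>y z. succ X y z \<longrightarrow> P y z)"

lemma consecutive_insert_below:
  assumes "finite X" "X \<noteq> {}" "m < Min X"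
  shows "consecutive P (insert m X) \<longleftrightarrow> P m (Min X) \<and> consecutive P X"
  unfolding consecutive_def by (auto simp: succ_insert_below[OF assms])

lemma consecutive_singleton: "consecutive P {x}"
  unfolding consecutive_def succ_def by simp

lemma Min_insert_Min_diff:
  assumes "finite A" "B \<subseteq> A" "B \<noteq> {}"
  shows "Min (insert (Min B) (A - B)) = Min A"
proof (cases "A - B = {}")
  case True
  then have "A = B" using assms(2) by blast
  then show ?thesis by simp
next
  case False
  have "A = (A - B) \<union> B" using assms(2) by blast
  then have "Min A = min (Min (A - B)) (Min B)"
    using assms False by (metis Min.union finite_Diff finite_subset)
  with False assms(1) show ?thesis by (simp add: min.commute)
qed

text \<open>The right-hand side of the theorem without its cardinality constraint, which makes
  sense also for \<open>A = B\<close>.\<close>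

definition extends_below :: "(int \<Rightarrow> int \<Rightarrow> bool) \<Rightarrow> int set \<Rightarrow> int set \<Rightarrow> bool" where
  "extends_below P A B \<longleftrightarrow> B \<noteq> {} \<and> B \<subseteq> A \<and> (\<forall>x \<in> A - B. x < Min B)
     \<and> consecutive P (insert (Min B) (A - B))"

definition peel_step :: "(int \<Rightarrow> int \<Rightarrow> bool) \<Rightarrow> int set \<Rightarrow> int set \<Rightarrow> bool" where
  "peel_step P A A' \<longleftrightarrow> A \<noteq> {} \<and> A' \<noteq> {} \<and> A = A' \<union> {Min A} \<and> Max A = Max A'
     \<and> P (Min A) (Min A')"

lemma extends_below_refl: "B \<noteq> {} \<Longrightarrow> extends_below P B B"
  unfolding extends_below_def by (simp add: consecutive_singleton)

lemma Min_in_diff_if_extends_below: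
  assumes "extends_below P A B" "finite A" "A \<noteq> B"
  shows "Min A \<in> A - B"
proof -
  have B: "B \<noteq> {}" "B \<subseteq> A" and below: "\<forall>x \<in> A - B. x < Min B"
    using assms(1) unfolding extends_below_def by auto
  obtain x where x: "x \<in> A - B" using assms(3) B(2) by blast
  have "Min A < Min B"
    using x below assms(2) by (meson DiffD1 Min_le le_less_trans)
  moreover have "Min B \<le> Min A" if "Min A \<in> B"
    using that B assms(2) by (simp add: finite_subset)
  moreover have "Min A \<in> A" using assms(2) x by (metis DiffD1 Min_in empty_iff)
  ultimately show ?thesis by (meson DiffI leD)
qed

lemma extends_below_peel_step:
  assumes less: "\<And>u v. P u v \<Longrightarrow> u < v"
    and step: "peel_step P A A'" and ext: "extends_below P A' B" and "finite A"
  shows "extends_below P A B \<and> card (A - B) = Suc (card (A' - B))"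
proof -
  define m where "m = Min A"
  have A: "A = insert m A'" and "A' \<noteq> {}" and P_m: "P m (Min A')"
    using step unfolding peel_step_def m_def by auto
  have fin: "finite A'" using \<open>finite A\<close> A by simp
  have B: "B \<noteq> {}" "B \<subseteq> A'" and below: "\<forall>x \<in> A' - B. x < Min B"
    and cons: "consecutive P (insert (Min B) (A' - B))"
    using ext unfolding extends_below_def by auto
  have "m < Min A'" using less[OF P_m] .
  then have m_below: "m < x" if "x \<in> A'" for x
    using fin that by (meson Min_le less_le_trans)
  have "Min B \<in> A'" using B fin by (meson Min_in finite_subset subsetD)
  then have "m < Min B" by (rule m_below)
  have diff: "A - B = insert m (A' - B)" and "m \<notin> A' - B"
    using A B(2) m_below by auto
  have Min_X: "Min (insert (Min B) (A' - B)) = Min A'"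
    by (rule Min_insert_Min_diff[OF fin B(2,1)])
  have "consecutive P (insert (Min B) (A - B))"
    using cons P_m \<open>m < Min A'\<close> fin
    by (simp add: diff insert_commute consecutive_insert_below Min_X)
  moreover have "\<forall>x \<in> A - B. x < Min B" using below \<open>m < Min B\<close> diff by auto
  ultimately show ?thesis
    using B A fin diff \<open>m \<notin> A' - B\<close> unfolding extends_below_def by auto
qed

lemma peel_step_extends_below:
  assumes ext: "extends_below P A B" and "finite A" "A \<noteq> B"
  defines "A' \<equiv> A - {Min A}"
  shows "peel_step P A A' \<and> extends_below P A' B"
proof -
  define m where "m = Min A"
  have m: "m \<in> A - B" unfolding m_def by (rule Min_in_diff_if_extends_below[OF assms(1-3)])
  have B: "B \<noteq> {}" "B \<subseteq> A" and below: "\<forall>x \<in> A - B. x < Min B"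
    and cons: "consecutive P (insert (Min B) (A - B))"
    using ext unfolding extends_below_def by auto
  have fin: "finite A'" using \<open>finite A\<close> unfolding A'_def by simp
  have A: "A = insert m A'" and B': "B \<subseteq> A'" and "A' \<noteq> {}"
    using m B unfolding A'_def m_def by auto
  have m_below: "m < x" if "x \<in> A'" for x
    using that \<open>finite A\<close> unfolding A'_def m_def by (simp add: le_neq_trans)
  have "m < Max A'" using m_below fin \<open>A' \<noteq> {}\<close> by simp
  then have Max: "Max A = Max A'" using A fin \<open>A' \<noteq> {}\<close> by simp
  have Min_X: "Min (insert (Min B) (A' - B)) = Min A'"
    by (rule Min_insert_Min_diff[OF fin B' B(1)])
  have "insert (Min B) (A - B) = insert m (insert (Min B) (A' - B))"
    using A m by auto
  then have "P m (Min A') \<and> consecutive P (insert (Min B) (A' - B))"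
    using cons m_below fin \<open>A' \<noteq> {}\<close>
    by (simp add: consecutive_insert_below Min_X)
  moreover have "\<forall>x \<in> A' - B. x < Min B" using below A by auto
  ultimately show ?thesis
    using B(1) B' A Max \<open>A' \<noteq> {}\<close> unfolding peel_step_def extends_below_def m_def by auto
qed

definition peel_seq :: "(int \<Rightarrow> int \<Rightarrow> bool) \<Rightarrow> int set \<Rightarrow> int set \<Rightarrow> nat \<Rightarrow> bool" where
  "peel_seq P A B k \<longleftrightarrow> (\<exists>S. S 0 = A \<and> S k = B \<and> (\<forall>i\<le>k. finite (S i))
     \<and> (\<forall>i<k. peel_step P (S i) (S (Suc i))))"

lemma peel_seq_0: "peel_seq P A B 0 \<longleftrightarrow> A = B \<and> finite A"
  unfolding peel_seq_def by auto

lemma peel_seq_Suc: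
  "peel_seq P A B (Suc k) \<longleftrightarrow> finite A \<and> (\<exists>A'. peel_step P A A' \<and> peel_seq P A' B k)"
proof
  assume "peel_seq P A B (Suc k)"
  then obtain S where S: "S 0 = A" "S (Suc k) = B" "\<forall>i\<le>Suc k. finite (S i)"
      "\<forall>i<Suc k. peel_step P (S i) (S (Suc i))"
    unfolding peel_seq_def by blast
  then have "peel_seq P (S 1) B k"
    unfolding peel_seq_def by (intro exI[of _ "S \<circ> Suc"]) auto
  with S show "finite A \<and> (\<exists>A'. peel_step P A A' \<and> peel_seq P A' B k)" by auto
next
  assume "finite A \<and> (\<exists>A'. peel_step P A A' \<and> peel_seq P A' B k)"
  then obtain A' S where "finite A" "peel_step P A A'" "S 0 = A'" "S k = B"
      "\<forall>i\<le>k. finite (S i)" "\<forall>i<k. peel_step P (S i) (S (Suc i))"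
    unfolding peel_seq_def by blast
  then show "peel_seq P A B (Suc k)"
    unfolding peel_seq_def
    by (intro exI[of _ "case_nat A S"]) (auto split: nat.split)
qed

lemma peel_seq_shift:
  "peel_seq P A B k \<longleftrightarrow> (\<exists>S. S a = A \<and> S (a + k) = B \<and> (\<forall>i. a \<le> i \<and> i \<le> a + k \<longrightarrow> finite (S i))
     \<and> (\<forall>i. a \<le> i \<and> i < a + k \<longrightarrow> peel_step P (S i) (S (Suc i))))"
proof
  assume "peel_seq P A B k"
  then obtain S where "S 0 = A" "S k = B" "\<forall>i\<le>k. finite (S i)"
      "\<forall>i<k. peel_step P (S i) (S (Suc i))"
    unfolding peel_seq_def by blast
  then show "\<exists>S. S a = A \<and> S (a + k) = B \<and> (\<forall>i. a \<le> i \<and> i \<le> a + k \<longrightarrow> finite (S i))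
     \<and> (\<forall>i. a \<le> i \<and> i < a + k \<longrightarrow> peel_step P (S i) (S (Suc i)))"
    by (intro exI[of _ "\<lambda>i. S (i - a)"]) (auto simp: Suc_diff_le)
next
  assume "\<exists>S. S a = A \<and> S (a + k) = B \<and> (\<forall>i. a \<le> i \<and> i \<le> a + k \<longrightarrow> finite (S i))
     \<and> (\<forall>i. a \<le> i \<and> i < a + k \<longrightarrow> peel_step P (S i) (S (Suc i)))"
  then obtain S where "S a = A" "S (a + k) = B" "\<forall>i. a \<le> i \<and> i \<le> a + k \<longrightarrow> finite (S i)"
      "\<forall>i. a \<le> i \<and> i < a + k \<longrightarrow> peel_step P (S i) (S (Suc i))"
    by blast
  then show "peel_seq P A B k"
    unfolding peel_seq_def by (intro exI[of _ "\<lambda>i. S (a + i)"]) auto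
qed

lemma peel_seq_Suc_last_nonempty: "peel_seq P A B (Suc k) \<Longrightarrow> B \<noteq> {}"
  unfolding peel_seq_def peel_step_def by (metis lessI)

lemma peel_seq_iff_extends_below:
  assumes less: "\<And>u v. P u v \<Longrightarrow> u < v" and "B \<noteq> {}"
  shows "peel_seq P A B k \<longleftrightarrow> finite A \<and> extends_below P A B \<and> card (A - B) = k"
proof (induction k arbitrary: A)
  case 0
  have "A = B" if "finite A" "extends_below P A B" "card (A - B) = 0"
    using that unfolding extends_below_def
    by (metis Diff_eq_empty_iff card_0_eq finite_Diff subset_antisym)
  then show ?case
    using extends_below_refl[OF \<open>B \<noteq> {}\<close>] unfolding peel_seq_0 by (metis Diff_cancel card.empty)
next
  case (Suc k)
  show ?case
  proof
    assume "peel_seq P A B (Suc k)"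
    then obtain A' where A: "finite A" and step: "peel_step P A A'" and "peel_seq P A' B k"
      unfolding peel_seq_Suc by blast
    then have "extends_below P A' B" and "card (A' - B) = k"
      using Suc.IH by simp_all
    with extends_below_peel_step[OF less step _ A]
    show "finite A \<and> extends_below P A B \<and> card (A - B) = Suc k"
      using A by simp
  next
    assume A: "finite A \<and> extends_below P A B \<and> card (A - B) = Suc k"
    then have "A \<noteq> B" by auto
    define A' where "A' = A - {Min A}"
    have "Min A \<in> A - B" using Min_in_diff_if_extends_below A \<open>A \<noteq> B\<close> by blast
    then have "card (A' - B) = k"
      using A unfolding A'_def by (simp add: Diff_insert2[symmetric])
    moreover have step: "peel_step P A A'" and "extends_below P A' B"
      using peel_step_extends_below[of P A B] A \<open>A \<noteq> B\<close> unfolding A'_def by simp_all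
    moreover have "finite A'" using A unfolding A'_def by simp
    ultimately have "peel_seq P A' B k" using Suc.IH by simp
    then show "peel_seq P A B (Suc k)" using A step unfolding peel_seq_Suc by blast
  qed
qed

lemma psi_less:
  assumes "(True, - c) \<in> set cs" "c > 0" "psi cs u v"
  shows "u < v"
  using assms unfolding psi_def holds_dc_def by force

lemma extends_below_card_iff:
  assumes "finite A" "k \<noteq> 0"
  shows "extends_below P A B \<and> card (A - B) = k \<longleftrightarrow>
    B \<noteq> {} \<and> A - B \<noteq> {} \<and> B \<subseteq> A \<and> card (A - B) = k \<and> Max (A - B) < Min B
    \<and> (\<forall>y z. succ ((A - B) \<union> {Min B}) y z \<longrightarrow> P y z)"
proof -
  have nonempty: "A - B \<noteq> {}" if "card (A - B) = k" using that assms(2) by force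
  then have "Max (A - B) < Min B \<longleftrightarrow> (\<forall>x \<in> A - B. x < Min B)" if "card (A - B) = k"
    using that assms(1) by (simp add: Max_less_iff)
  with nonempty show ?thesis
    unfolding extends_below_def consecutive_def Un_insert_right Un_empty_right by blast
qed

theorem mainTheorem6:
  fixes cs :: "dconstr list" and c :: int and n :: nat and S2 Sn :: "int set"
  assumes "(True, - c) \<in> set cs" and "c > 0" and "n \<ge> 3"
    and "finite S2" and "finite Sn"
  shows "(\<exists>S :: nat \<Rightarrow> int set. S 2 = S2 \<and> S n = Sn
            \<and> (\<forall>i. 2 \<le> i \<and> i \<le> n \<longrightarrow> finite (S i))
            \<and> (\<forall>i. 2 \<le> i \<and> i \<le> n - 1 \<longrightarrow>
                  (S i \<noteq> {} \<and> S i = S (Suc i) \<union> {Min (S i)})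
                \<and> (S i \<noteq> {} \<and> S (Suc i) \<noteq> {} \<and> Max (S i) = Max (S (Suc i)))
                \<and> (S i \<noteq> {} \<and> S (Suc i) \<noteq> {} \<and> psi cs (Min (S i)) (Min (S (Suc i))))))
     \<longleftrightarrow>
         (Sn \<noteq> {} \<and> S2 - Sn \<noteq> {} \<and> Sn \<subseteq> S2 \<and> card (S2 - Sn) = n - 2
          \<and> Max (S2 - Sn) < Min Sn
          \<and> (\<forall>y z. succ ((S2 - Sn) \<union> {Min Sn}) y z \<longrightarrow> psi cs y z))"
proof -
  have less: "\<And>u v. psi cs u v \<Longrightarrow> u < v" using psi_less assms(1,2) by blast
  have seq: "peel_seq (psi cs) S2 Sn (n - 2) \<longleftrightarrow>
      finite S2 \<and> extends_below (psi cs) S2 Sn \<and> card (S2 - Sn) = n - 2"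
  proof (cases "Sn = {}")
    case True
    have "n - 2 = Suc (n - 3)" using assms(3) by simp
    then show ?thesis
      using True peel_seq_Suc_last_nonempty unfolding extends_below_def by metis
  qed (rule peel_seq_iff_extends_below[OF less])
  have shift: "2 + (n - 2) = n" and "n - 2 \<noteq> 0" and last: "\<And>i. i \<le> n - 1 \<longleftrightarrow> i < n" using assms(3) by auto
  have step: "\<And>A A'. ((A \<noteq> {} \<and> A = A' \<union> {Min A}) \<and> (A \<noteq> {} \<and> A' \<noteq> {} \<and> Max A = Max A')
      \<and> (A \<noteq> {} \<and> A' \<noteq> {} \<and> psi cs (Min A) (Min A'))) \<longleftrightarrow> peel_step (psi cs) A A'"
    unfolding peel_step_def by blast
  from seq show ?thesis
    unfolding peel_seq_shift[where a = 2] extends_below_card_iff[OF assms(4) \<open>n - 2 \<noteq> 0\<close>]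
    using assms(4) by (simp only: shift last step simp_thms)
qed

end
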